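(* For every linkage $\mathcal{L}=(G,\ell)$, the annotation map $\mathrm{Annot}_{\mathcal{L}}:(\mathbb{R}^2)^{V}\to(\mathbb{R}^2)^{V}\times\mathbb{R}^{E\times E}$ is injective, semi-algebraic, and continuous on the set of nontouching configurations of linkages $\epsilon$-related to $\mathcal L$ (for any $\epsilon\ge0$), i.e. on $\bigcup_{\epsilon\ge 0}\mathrm{NConf}_\epsilon(\mathcal L)$.
   Context: A linkage is a pair $\mathcal L=(G,\ell)$ with $G=(V,E)$ a finite graph and $\ell:E\to\mathbb R_{\ge0}$ (edges are called bars; zero lengths are allowed). A configuration of $\mathcal L$ is a map $C:V\to\mathbb R^2$ with $|C(v)-C(w)|=\ell(v,w)$ for every bar $(v,w)$. Two linkages $(G_1,\ell_1),(G_2,\ell_2)$ are $\epsilon$-related if $G_1=G_2$ and $|\ell_1(e)-\ell_2(e)|\le\epsilon$ for all edges $e$. A configuration $C$ of a linkage $\mathcal L'=(G,\ell')$ is nontouching if no two bars intersect except at endpoints, and two vertices have the same position if and only if they are joined in $G$ by a path of bars of $\ell'$-length zero (vertices joined by such a path are regarded as merged into one vertex, so bars incident to them may meet at that common point). $\mathrm{NConf}_\epsilon(\mathcal L)$ denotes the set of nontouching configurations of linkages $\epsilon$-related to $\mathcal L$ (as maps $V\to\mathbb R^2$). Order function: for oriented segments $e_1,e_2$, in coordinates where $e_1$ runs from $(0,0)$ to $(l,0)$, let $d_\pm(e_1,e_2)=\mathrm{len}\{x\in[0,l]:\exists y,\ \pm y\ge 0,\ (x,y)\in e_2\}$ and $\mathrm{Ord}(e_1,e_2)=d_+-d_-$.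 Each edge is given a fixed canonical orientation; for $e=(u,v)$ write $C(e)$ for the oriented segment from $C(u)$ to $C(v)$. The annotation map is $\mathrm{Annot}_{\mathcal L}(C)=(C,A)$ where $A_{i,j}=\mathrm{Ord}(C(e_i),C(e_j))$ for $e_i,e_j\in E$. *)

theory Defs
  imports "HOL-Analysis.Analysis"
begin

text \<open>A linkage: vertex set = finite type 'v, edge set E :: 'e set (over a finite type 'e),
  each edge e has a canonical orientation from src e to tgt e; lengths ell :: 'e => real.\<close>

definition simple_graph :: "'e set \<Rightarrow> ('e \<Rightarrow> 'v) \<Rightarrow> ('e \<Rightarrow> 'v) \<Rightarrow> bool" where
  "simple_graph E src tgt \<longleftrightarrow>
     (\<forall>e\<in>E. src e \<noteq> tgt e) \<and>
     (\<forall>e\<in>E. \<forall>e'\<in>E. e \<noteq> e' \<longrightarrow> {src e, tgt e} \<noteq> {src e', tgt e'})"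

definition linkage :: "'e set \<Rightarrow> ('e \<Rightarrow> 'v) \<Rightarrow> ('e \<Rightarrow> 'v) \<Rightarrow> ('e \<Rightarrow> real) \<Rightarrow> bool" where
  "linkage E src tgt ell \<longleftrightarrow> simple_graph E src tgt \<and> (\<forall>e\<in>E. ell e \<ge> 0)"

definition is_configuration ::
  "'e set \<Rightarrow> ('e \<Rightarrow> 'v::finite) \<Rightarrow> ('e \<Rightarrow> 'v) \<Rightarrow> ('e \<Rightarrow> real) \<Rightarrow> (real^2)^'v \<Rightarrow> bool" where
  "is_configuration E src tgt ell C \<longleftrightarrow>
     (\<forall>e\<in>E. dist (C $ src e) (C $ tgt e) = ell e)"

definition eps_related :: "'e set \<Rightarrow> real \<Rightarrow> ('e \<Rightarrow> real) \<Rightarrow> ('e \<Rightarrow> real) \<Rightarrow> bool" where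
  "eps_related E eps ell ell' \<longleftrightarrow> (\<forall>e\<in>E. \<bar>ell e - ell' e\<bar> \<le> eps)"

definition zero_joined ::
  "'e set \<Rightarrow> ('e \<Rightarrow> 'v) \<Rightarrow> ('e \<Rightarrow> 'v) \<Rightarrow> ('e \<Rightarrow> real) \<Rightarrow> 'v \<Rightarrow> 'v \<Rightarrow> bool" where
  "zero_joined E src tgt ell u v \<longleftrightarrow>
     (let Z = {(src e, tgt e) | e. e \<in> E \<and> ell e = 0} in (u, v) \<in> (Z \<union> Z\<inverse>)\<^sup>*)"

definition bar_segment :: "('e \<Rightarrow> 'v::finite) \<Rightarrow> ('e \<Rightarrow> 'v) \<Rightarrow> (real^2)^'v \<Rightarrow> 'e \<Rightarrow> (real^2) set" where
  "bar_segment src tgt C e = closed_segment (C $ src e) (C $ tgt e)"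

definition nontouching ::
  "'e set \<Rightarrow> ('e \<Rightarrow> 'v::finite) \<Rightarrow> ('e \<Rightarrow> 'v) \<Rightarrow> ('e \<Rightarrow> real) \<Rightarrow> (real^2)^'v \<Rightarrow> bool" where
  "nontouching E src tgt ell C \<longleftrightarrow>
     (\<forall>e1\<in>E. \<forall>e2\<in>E. e1 \<noteq> e2 \<longrightarrow>
        bar_segment src tgt C e1 \<inter> bar_segment src tgt C e2
          \<subseteq> {C $ src e1, C $ tgt e1} \<inter> {C $ src e2, C $ tgt e2}) \<and>
     (\<forall>u v. C $ u = C $ v \<longleftrightarrow> zero_joined E src tgt ell u v)"

definition NConf ::
  "'e set \<Rightarrow> ('e \<Rightarrow> 'v::finite) \<Rightarrow> ('e \<Rightarrow> 'v) \<Rightarrow> ('e \<Rightarrow> real) \<Rightarrow> real \<Rightarrow> ((real^2)^'v) set" where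
  "NConf E src tgt ell eps =
     {C. \<exists>ell'. linkage E src tgt ell' \<and> eps_related E eps ell ell' \<and>
                is_configuration E src tgt ell' C \<and> nontouching E src tgt ell' C}"

text \<open>Coordinates of z in the frame where the oriented segment p->q runs from (0,0) to (l,0),
  l = |q - p| (rotation + translation; y-axis is the positive 90-degree rotation of q - p).\<close>
definition xcoord :: "real^2 \<Rightarrow> real^2 \<Rightarrow> real^2 \<Rightarrow> real" where
  "xcoord p q z = ((z - p) \<bullet> (q - p)) / dist p q"

definition ycoord :: "real^2 \<Rightarrow> real^2 \<Rightarrow> real^2 \<Rightarrow> real" where
  "ycoord p q z = ((q - p) $ 1 * (z - p) $ 2 - (q - p) $ 2 * (z - p) $ 1) / dist p q"

definition d_plus :: "real^2 \<Rightarrow> real^2 \<Rightarrow> real^2 \<Rightarrow> real^2 \<Rightarrow> real" where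
  "d_plus p q r s = measure lebesgue
     {x. x \<in> {0..dist p q} \<and> (\<exists>z\<in>closed_segment r s. xcoord p q z = x \<and> ycoord p q z \<ge> 0)}"

definition d_minus :: "real^2 \<Rightarrow> real^2 \<Rightarrow> real^2 \<Rightarrow> real^2 \<Rightarrow> real" where
  "d_minus p q r s = measure lebesgue
     {x. x \<in> {0..dist p q} \<and> (\<exists>z\<in>closed_segment r s. xcoord p q z = x \<and> ycoord p q z \<le> 0)}"

text \<open>Ord(e1, e2) for e1 the oriented segment p->q and e2 the oriented segment r->s.\<close>
definition Ord :: "real^2 \<Rightarrow> real^2 \<Rightarrow> real^2 \<Rightarrow> real^2 \<Rightarrow> real" where
  "Ord p q r s = d_plus p q r s - d_minus p q r s"

text \<open>Annotation map. The matrix A is indexed by E x E; entries outside E x E are set to 0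
  (so the target R^(E x E) is embedded in real^('e x 'e)).\<close>
definition Annot ::
  "'e set \<Rightarrow> ('e::finite \<Rightarrow> 'v::finite) \<Rightarrow> ('e \<Rightarrow> 'v) \<Rightarrow> (real^2)^'v \<Rightarrow> ((real^2)^'v) \<times> (real^('e \<times> 'e))" where
  "Annot E src tgt C =
     (C, \<chi> ij. if fst ij \<in> E \<and> snd ij \<in> E
               then Ord (C $ src (fst ij)) (C $ tgt (fst ij)) (C $ src (snd ij)) (C $ tgt (snd ij))
               else 0)"

inductive_set poly_fun :: "('a::euclidean_space \<Rightarrow> real) set" where
  const: "(\<lambda>x. c) \<in> poly_fun"
| coord: "b \<in> Basis \<Longrightarrow> (\<lambda>x. x \<bullet> b) \<in> poly_fun"
| add: "p \<in> poly_fun \<Longrightarrow> q \<in> poly_fun \<Longrightarrow> (\<lambda>x. p x + q x) \<in> poly_fun"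
| mult: "p \<in> poly_fun \<Longrightarrow> q \<in> poly_fun \<Longrightarrow> (\<lambda>x. p x * q x) \<in> poly_fun"

inductive_set semialgebraic :: "('a::euclidean_space) set set" where
  zero: "p \<in> poly_fun \<Longrightarrow> {x. p x = 0} \<in> semialgebraic"
| pos: "p \<in> poly_fun \<Longrightarrow> {x. p x > 0} \<in> semialgebraic"
| un: "A \<in> semialgebraic \<Longrightarrow> B \<in> semialgebraic \<Longrightarrow> A \<union> B \<in> semialgebraic"
| int: "A \<in> semialgebraic \<Longrightarrow> B \<in> semialgebraic \<Longrightarrow> A \<inter> B \<in> semialgebraic"
| compl: "A \<in> semialgebraic \<Longrightarrow> - A \<in> semialgebraic"

definition semialgebraic_map_on ::
  "'a::euclidean_space set \<Rightarrow> ('a \<Rightarrow> 'b::euclidean_space) \<Rightarrow> bool" where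
  "semialgebraic_map_on S f \<longleftrightarrow> {(x, f x) | x. x \<in> S} \<in> semialgebraic"

end

theory Submission
  imports Defs
begin

(* Injectivity is immediate, since Annot C records C itself.  The union of the sets
   NConf_eps is the set of configurations that are nontouching for the lengths they realise
   (predicate NT), because any length function is eps-related to ell for eps large.
   The core is an explicit formula for Ord(e1, e2) when e2 meets e1 at most in the endpoints
   of e1: in the frame of e1, e2 is the graph of an affine function over the interval
   [lo, hi] of shared abscissae; this function has no zero in (lo, hi), so one of d_plus,
   d_minus is hi - lo and the other is 0, i.e.
      Ord = sgn (height of e2 over the midpoint of [lo, hi]) * (hi - lo).
   Continuity follows from the formula, and from |Ord| <= max 0 (hi - lo) <= |e1| near
   degenerate configurations.  Semi-algebraicity follows since the formula (via a sign
   condition), the nontouching condition (via orientation tests) and the zero-length-path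
   condition (via a finite disjunction over sets of bars) are Boolean combinations of
   polynomial equations and inequalities in the coordinates. *)

lemma poly_diff: "p \<in> poly_fun \<Longrightarrow> q \<in> poly_fun \<Longrightarrow> (\<lambda>x. p x - q x) \<in> poly_fun"
proof -
  assume "p \<in> poly_fun" "q \<in> poly_fun"
  then have "(\<lambda>x. p x + (\<lambda>x. -1) x * q x) \<in> poly_fun" by (intro poly_fun.intros)
  then show ?thesis by simp
qed

lemma poly_sum:
  "finite A \<Longrightarrow> (\<And>a. a \<in> A \<Longrightarrow> f a \<in> poly_fun) \<Longrightarrow> (\<lambda>x. \<Sum>a\<in>A. f a x) \<in> poly_fun"
proof (induction A rule: finite_induct)
  case empty
  then show ?case using poly_fun.const[of 0] by simp
next
  case (insert a A)
  then have "(\<lambda>x. f a x + (\<Sum>a\<in>A. f a x)) \<in> poly_fun" by (intro poly_fun.add) simp_all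
  then show ?case using insert.hyps by simp
qed

lemma poly_linear:
  fixes f :: "'a::euclidean_space \<Rightarrow> real"
  assumes "linear f"
  shows "f \<in> poly_fun"
proof -
  have fx: "f x = (\<Sum>b\<in>Basis. (\<lambda>b x. (x \<bullet> b) * f b) b x)" for x
  proof -
    have "f x = f (\<Sum>b\<in>Basis. (x \<bullet> b) *\<^sub>R b)" by (simp only: euclidean_representation)
    also have "\<dots> = (\<Sum>b\<in>Basis. f ((x \<bullet> b) *\<^sub>R b))" by (rule linear_sum[OF assms])
    also have "\<dots> = (\<Sum>b\<in>Basis. (x \<bullet> b) * f b)"
      by (rule sum.cong) (simp_all only: linear_scale[OF assms] real_scaleR_def)
    finally show ?thesis by simp
  qed
  have "f = (\<lambda>x. \<Sum>b\<in>Basis. (\<lambda>b x. (x \<bullet> b) * f b) b x)" by (rule ext) (rule fx)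
  also have "\<dots> \<in> poly_fun"
  proof (rule poly_sum)
    fix b :: 'a assume "b \<in> Basis"
    then show "(\<lambda>x. x \<bullet> b * f b) \<in> poly_fun" by (rule poly_fun.mult[OF poly_fun.coord poly_fun.const])
  qed simp
  finally show ?thesis .
qed

text \<open>A predicate is semi-algebraic if the set it defines is.  The closure lemmas below let
  the automation check semi-algebraicity of a formula by following its syntax.\<close>
definition sa :: "('a::euclidean_space \<Rightarrow> bool) \<Rightarrow> bool" where
  "sa P \<longleftrightarrow> {x. P x} \<in> semialgebraic"

lemma sa_eq0: "p \<in> poly_fun \<Longrightarrow> sa (\<lambda>x. p x = 0)"
  unfolding sa_def by (rule semialgebraic.zero)

lemma sa_pos: "p \<in> poly_fun \<Longrightarrow> sa (\<lambda>x. p x > 0)"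
  unfolding sa_def by (rule semialgebraic.pos)

lemma sa_conj: "sa P \<Longrightarrow> sa Q \<Longrightarrow> sa (\<lambda>x. P x \<and> Q x)"
  unfolding sa_def Collect_conj_eq by (rule semialgebraic.int)

lemma sa_disj: "sa P \<Longrightarrow> sa Q \<Longrightarrow> sa (\<lambda>x. P x \<or> Q x)"
  unfolding sa_def Collect_disj_eq by (rule semialgebraic.un)

lemma sa_not: "sa P \<Longrightarrow> sa (\<lambda>x. \<not> P x)"
  unfolding sa_def Collect_neg_eq by (rule semialgebraic.compl)

lemma sa_imp: "sa P \<Longrightarrow> sa Q \<Longrightarrow> sa (\<lambda>x. P x \<longrightarrow> Q x)"
  using sa_disj[OF sa_not] by (simp only: imp_conv_disj)

lemma sa_iff: "sa P \<Longrightarrow> sa Q \<Longrightarrow> sa (\<lambda>x. P x \<longleftrightarrow> Q x)"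
  using sa_conj[OF sa_imp sa_imp] by (simp only: iff_conv_conj_imp)

lemma sa_const: "sa (\<lambda>x. b)"
proof -
  have T: "sa (\<lambda>x. True)" using sa_eq0[OF poly_fun.const[of 0]] by simp
  then show ?thesis using sa_not[OF T] by (cases b) simp_all
qed

lemma sa_eq: "p \<in> poly_fun \<Longrightarrow> q \<in> poly_fun \<Longrightarrow> sa (\<lambda>x. p x = q x)"
  using sa_eq0[OF poly_diff, of p q] by simp

lemma sa_less: "p \<in> poly_fun \<Longrightarrow> q \<in> poly_fun \<Longrightarrow> sa (\<lambda>x. p x < q x)"
  using sa_pos[OF poly_diff, of q p] by simp

lemma sa_le: "p \<in> poly_fun \<Longrightarrow> q \<in> poly_fun \<Longrightarrow> sa (\<lambda>x. p x \<le> q x)"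
  using sa_not[OF sa_less, of q p] by (simp add: not_less)

lemma sa_ball:
  "finite A \<Longrightarrow> (\<And>a. a \<in> A \<Longrightarrow> sa (\<lambda>x. Q x a)) \<Longrightarrow> sa (\<lambda>x. \<forall>a\<in>A. Q x a)"
proof (induction A rule: finite_induct)
  case empty
  then show ?case using sa_const[of True] by simp
next
  case (insert a A)
  then have "sa (\<lambda>x. Q x a \<and> (\<forall>a\<in>A. Q x a))" by (intro sa_conj) simp_all
  then show ?case by simp
qed

lemma sa_bex:
  "finite A \<Longrightarrow> (\<And>a. a \<in> A \<Longrightarrow> sa (\<lambda>x. Q x a)) \<Longrightarrow> sa (\<lambda>x. \<exists>a\<in>A. Q x a)"
proof (induction A rule: finite_induct)
  case empty
  then show ?case using sa_const[of False] by simp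
next
  case (insert a A)
  then have "sa (\<lambda>x. Q x a \<or> (\<exists>a\<in>A. Q x a))" by (intro sa_disj) simp_all
  then show ?case by simp
qed

section \<open>Segments in the plane\<close>

lemma inner2: "(u::real^2) \<bullet> w = u$1 * w$1 + u$2 * w$2"
  by (simp add: inner_vec_def sum_2)

lemma vec2_eq: "(u::real^2) = w \<longleftrightarrow> u$1 = w$1 \<and> u$2 = w$2"
  by (simp add: vec_eq_iff forall_2)

definition cross :: "real^2 \<Rightarrow> real^2 \<Rightarrow> real" where
  "cross u w = u$1 * w$2 - u$2 * w$1"

definition orient :: "real^2 \<Rightarrow> real^2 \<Rightarrow> real^2 \<Rightarrow> real" where
  "orient p q r = cross (q - p) (r - p)"

lemma cross_zero_param:
  assumes "cross d w = 0" "d \<noteq> 0"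
  shows "w = ((w \<bullet> d) / (d \<bullet> d)) *\<^sub>R d"
proof -
  have c: "d$1 * w$2 = d$2 * w$1" using assms(1) by (simp add: cross_def)
  have "(w \<bullet> d) * d$1 = w$1 * (d \<bullet> d)" "(w \<bullet> d) * d$2 = w$2 * (d \<bullet> d)"
    using c unfolding inner2 by algebra+
  moreover have "d \<bullet> d \<noteq> 0" using assms(2) by simp
  ultimately show ?thesis by (simp add: vec2_eq field_simps)
qed

lemma line_param:
  assumes "p \<noteq> q" "orient p q r = 0"
  obtains \<rho> where "r = p + \<rho> *\<^sub>R (q - p)"
proof -
  have "r - p = (((r - p) \<bullet> (q - p)) / ((q - p) \<bullet> (q - p))) *\<^sub>R (q - p)"
    using cross_zero_param[of "q - p" "r - p"] assms by (simp add: orient_def)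
  then show ?thesis using that[of "((r - p) \<bullet> (q - p)) / ((q - p) \<bullet> (q - p))"]
    by (metis add.commute diff_add_cancel)
qed

lemma in_segment_iff:
  "z \<in> closed_segment r s \<longleftrightarrow> cross (s - r) (z - r) = 0 \<and> (z - r) \<bullet> (z - s) \<le> 0"
proof
  assume "z \<in> closed_segment r s"
  then obtain u where u: "0 \<le> u" "u \<le> 1" "z = (1 - u) *\<^sub>R r + u *\<^sub>R s" by (auto simp: in_segment)
  have z1: "z - r = u *\<^sub>R (s - r)" and z2: "z - s = (u - 1) *\<^sub>R (s - r)"
    using u(3) by (simp_all add: algebra_simps)
  have "cross (s - r) (z - r) = 0" unfolding z1 by (simp add: cross_def algebra_simps)
  moreover have "(z - r) \<bullet> (z - s) = u * (u - 1) * ((s - r) \<bullet> (s - r))"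
    unfolding z1 z2 by (simp add: algebra_simps)
  moreover have "u * (u - 1) \<le> 0" using u by (simp add: mult_nonneg_nonpos)
  ultimately show "cross (s - r) (z - r) = 0 \<and> (z - r) \<bullet> (z - s) \<le> 0"
    by (simp add: mult_nonpos_nonneg)
next
  assume h: "cross (s - r) (z - r) = 0 \<and> (z - r) \<bullet> (z - s) \<le> 0"
  show "z \<in> closed_segment r s"
  proof (cases "s = r")
    case True
    then have "(z - r) \<bullet> (z - r) \<le> 0" using h by simp
    then have "(z - r) \<bullet> (z - r) = 0" by (meson antisym inner_ge_zero)
    then have "z = r" by simp
    then show ?thesis by simp
  next
    case False
    define d where "d = s - r"
    define u where "u = ((z - r) \<bullet> d) / (d \<bullet> d)"
    have d0: "d \<noteq> 0" using False by (simp add: d_def)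
    have zr: "z - r = u *\<^sub>R d" using cross_zero_param[of d "z - r"] h d0 by (simp add: d_def u_def)
    have zs: "z - s = (u - 1) *\<^sub>R d" using zr by (simp add: d_def algebra_simps)
    have "(z - r) \<bullet> (z - s) = u * (u - 1) * (d \<bullet> d)" unfolding zr zs by (simp add: algebra_simps)
    moreover have "d \<bullet> d > 0" using d0 by simp
    ultimately have "u * (u - 1) \<le> 0" using h mult_pos_pos[of "u * (u - 1)" "d \<bullet> d"]
      by (smt (verit))
    then have "0 \<le> u" "u \<le> 1" by (smt (verit) mult_neg_neg mult_pos_pos)+
    moreover have "z = (1 - u) *\<^sub>R r + u *\<^sub>R s" using zr by (simp add: d_def algebra_simps)
    ultimately show ?thesis by (auto simp: in_segment)
  qed
qed

lemma orient_comb: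
  "orient p q ((1 - u) *\<^sub>R r + u *\<^sub>R s) = (1 - u) * orient p q r + u * orient p q s"
  by (simp add: orient_def cross_def algebra_simps)

lemma orient_seg: "z \<in> closed_segment p q \<Longrightarrow> orient p q z = 0"
  using in_segment_iff[of z p q] by (simp add: orient_def)

text \<open>Two vectors with nonzero cross product span the plane, so a vector orthogonal (in the
  cross-product sense) to both is zero.\<close>
lemma cross_unique:
  assumes "cross a v = 0" "cross b v = 0" "cross a b \<noteq> 0"
  shows "v = 0"
proof -
  have "v$1 * cross a b = b$1 * cross a v - a$1 * cross b v"
    and "v$2 * cross a b = b$2 * cross a v - a$2 * cross b v"
    by (simp_all add: cross_def algebra_simps)
  then show ?thesis using assms by (simp add: vec2_eq)
qed

lemma seg_line:
  fixes p d :: "real^2"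
  assumes "min b c \<le> a" "a \<le> max b c"
  shows "p + a *\<^sub>R d \<in> closed_segment (p + b *\<^sub>R d) (p + c *\<^sub>R d)"
proof (cases "b = c")
  case True
  then show ?thesis using assms by simp
next
  case False
  define \<mu> where "\<mu> = (a - b) / (c - b)"
  have m: "0 \<le> \<mu> \<and> \<mu> \<le> 1" using assms False
    by (cases "b < c") (auto simp: \<mu>_def divide_simps min_def max_def split: if_splits)
  have "b + \<mu> * (c - b) = a" using False by (simp add: \<mu>_def)
  then have "p + a *\<^sub>R d = (1 - \<mu>) *\<^sub>R (p + b *\<^sub>R d) + \<mu> *\<^sub>R (p + c *\<^sub>R d)"
    by (simp add: algebra_simps flip: scaleR_add_left)
  then show ?thesis using m by (auto simp: in_segment)
qed

lemma zero_comb: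
  fixes a b u :: real
  assumes "0 < u" "u < 1" "(1 - u) * a + u * b = 0" "a * b \<ge> 0"
  shows "a = 0 \<and> b = 0"
proof (rule ccontr)
  assume "\<not> (a = 0 \<and> b = 0)"
  then consider "a > 0" | "a < 0" | "a = 0 \<and> b \<noteq> 0" by linarith
  then show False
  proof cases
    case 1
    then have "b \<ge> 0" using assms(4) by (metis mult_pos_neg not_le)
    then have "(1 - u) * a > 0" "u * b \<ge> 0" using 1 assms by simp_all
    then show False using assms(3) by linarith
  next
    case 2
    then have "b \<le> 0" using assms(4) by (metis mult_neg_pos not_le)
    then have "(1 - u) * a < 0" "u * b \<le> 0" using 2 assms by (simp_all add: mult_pos_neg mult_nonneg_nonpos)
    then show False using assms(3) by linarith
  next
    case 3
    then show False using assms by simp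
  qed
qed

lemma strictly_between:
  fixes u \<rho> \<sigma> :: real
  assumes "0 < u" "u < 1" "\<rho> \<noteq> \<sigma>"
  shows "min \<rho> \<sigma> < (1 - u) * \<rho> + u * \<sigma> \<and> (1 - u) * \<rho> + u * \<sigma> < max \<rho> \<sigma>"
proof -
  have e: "(1 - u) * \<rho> + u * \<sigma> = \<rho> + u * (\<sigma> - \<rho>)" "(1 - u) * \<rho> + u * \<sigma> = \<sigma> - (1 - u) * (\<sigma> - \<rho>)"
    by (simp_all add: algebra_simps)
  show ?thesis
  proof (cases "\<rho> < \<sigma>")
    case True
    then have "0 < u * (\<sigma> - \<rho>)" "0 < (1 - u) * (\<sigma> - \<rho>)" using assms by simp_all
    then show ?thesis using True e by (simp add: min_def max_def)
  next
    case False
    then have "u * (\<sigma> - \<rho>) < 0" "(1 - u) * (\<sigma> - \<rho>) < 0"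
      using assms by (simp_all add: mult_pos_neg)
    then show ?thesis using False e by (simp add: min_def max_def)
  qed
qed

text \<open>One-dimensional core of the collinear case: if the intervals [0,1] and [rho,sigma]
  share an interior point t, and no endpoint of one lies strictly inside the other, then the
  intervals coincide.\<close>
lemma interval_overlap:
  fixes \<rho> \<sigma> t :: real
  assumes "0 < t" "t < 1" "min \<rho> \<sigma> < t" "t < max \<rho> \<sigma>"
    and "0 \<le> \<rho> \<and> \<rho> \<le> 1 \<longrightarrow> \<rho> = 0 \<or> \<rho> = 1"
    and "0 \<le> \<sigma> \<and> \<sigma> \<le> 1 \<longrightarrow> \<sigma> = 0 \<or> \<sigma> = 1"
    and "min \<rho> \<sigma> \<le> 0 \<and> 0 \<le> max \<rho> \<sigma> \<longrightarrow> \<rho> = 0 \<or> \<sigma> = 0"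
    and "min \<rho> \<sigma> \<le> 1 \<and> 1 \<le> max \<rho> \<sigma> \<longrightarrow> \<rho> = 1 \<or> \<sigma> = 1"
  shows "(\<rho> = 0 \<and> \<sigma> = 1) \<or> (\<rho> = 1 \<and> \<sigma> = 0)"
  using assms by (auto simp: min_def max_def split: if_splits)

lemma collinear_overlap:
  assumes pq: "p \<noteq> q" and o1: "orient p q r = 0" and o2: "orient p q s = 0"
    and z1: "z \<in> closed_segment p q" and z2: "z \<in> closed_segment r s"
    and zn: "z \<noteq> p" "z \<noteq> q" "z \<noteq> r" "z \<noteq> s"
    and m1: "p \<in> closed_segment r s \<longrightarrow> p = r \<or> p = s"
    and m2: "q \<in> closed_segment r s \<longrightarrow> q = r \<or> q = s"
    and m3: "r \<in> closed_segment p q \<longrightarrow> r = p \<or> r = q"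
    and m4: "s \<in> closed_segment p q \<longrightarrow> s = p \<or> s = q"
  shows "p = r \<and> q = s \<or> p = s \<and> q = r"
proof -
  define d where "d = q - p"
  define P :: "real \<Rightarrow> real^2" where "P a = p + a *\<^sub>R d" for a
  have inj: "P a = P b \<longleftrightarrow> a = b" for a b using pq by (simp add: P_def d_def)
  have seg: "P a \<in> closed_segment (P b) (P c)" if "min b c \<le> a" "a \<le> max b c" for a b c
    using seg_line[OF that] by (simp add: P_def)
  obtain \<rho> where r: "r = P \<rho>" using line_param[OF pq o1] by (auto simp: P_def d_def)
  obtain \<sigma> where s: "s = P \<sigma>" using line_param[OF pq o2] by (auto simp: P_def d_def)
  have p: "p = P 0" and q: "q = P 1" by (simp_all add: P_def d_def)
  obtain t where t: "0 \<le> t" "t \<le> 1" "z = (1 - t) *\<^sub>R p + t *\<^sub>R q"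
    using z1 by (auto simp: in_segment)
  obtain u where u: "0 \<le> u" "u \<le> 1" "z = (1 - u) *\<^sub>R r + u *\<^sub>R s"
    using z2 by (auto simp: in_segment)
  have zt: "z = P t" using t(3) by (simp add: P_def d_def algebra_simps)
  have "z = P ((1 - u) * \<rho> + u * \<sigma>)" using u(3) by (simp add: r s P_def algebra_simps)
  then have teq: "t = (1 - u) * \<rho> + u * \<sigma>" using zt inj by simp
  have "t \<noteq> 0" "t \<noteq> 1" using zn(1,2) zt p q by auto
  moreover have "u \<noteq> 0" "u \<noteq> 1" using zn(3,4) u(3) by auto
  moreover have "\<rho> \<noteq> \<sigma>" using zn(3) z2 r s by auto
  ultimately have "min \<rho> \<sigma> < t \<and> t < max \<rho> \<sigma>"
    using strictly_between[of u \<rho> \<sigma>] teq u(1,2) by simp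
  moreover have "(\<rho> = 0 \<and> \<sigma> = 1) \<or> (\<rho> = 1 \<and> \<sigma> = 0)"
  proof (rule interval_overlap)
    show "0 \<le> \<rho> \<and> \<rho> \<le> 1 \<longrightarrow> \<rho> = 0 \<or> \<rho> = 1"
      using m3 seg[of 0 1 \<rho>] inj by (auto simp: r p q)
    show "0 \<le> \<sigma> \<and> \<sigma> \<le> 1 \<longrightarrow> \<sigma> = 0 \<or> \<sigma> = 1"
      using m4 seg[of 0 1 \<sigma>] inj by (auto simp: s p q)
    show "min \<rho> \<sigma> \<le> 0 \<and> 0 \<le> max \<rho> \<sigma> \<longrightarrow> \<rho> = 0 \<or> \<sigma> = 0"
      using m1 seg[of \<rho> \<sigma> 0] inj by (auto simp: r s p)
    show "min \<rho> \<sigma> \<le> 1 \<and> 1 \<le> max \<rho> \<sigma> \<longrightarrow> \<rho> = 1 \<or> \<sigma> = 1"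
      using m2 seg[of \<rho> \<sigma> 1] inj by (auto simp: r s q)
  qed (use t \<open>t \<noteq> 0\<close> \<open>t \<noteq> 1\<close> calculation in auto)
  then show ?thesis by (auto simp: r s p q)
qed

text \<open>The zero of the affine function with values x at 0 and y at 1 lies in (0, 1) when x
  and y have opposite signs.\<close>
lemma opposite_signs_ratio:
  fixes x y :: real
  assumes "x * y < 0"
  shows "0 < x / (x - y) \<and> x / (x - y) < 1"
  using assms by (cases "x > 0") (auto simp: divide_simps mult_less_0_iff)

lemma proper_crossing:
  assumes h12: "orient p q r * orient p q s < 0" and h34: "orient r s p * orient r s q < 0"
  obtains z where "z \<in> closed_segment p q" "z \<in> closed_segment r s" "z \<noteq> r" "z \<noteq> s"
proof -
  define u where "u = orient p q r / (orient p q r - orient p q s)"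
  define t where "t = orient r s p / (orient r s p - orient r s q)"
  define z where "z = (1 - u) *\<^sub>R r + u *\<^sub>R s"
  define w where "w = (1 - t) *\<^sub>R p + t *\<^sub>R q"
  have u01: "0 < u \<and> u < 1" and t01: "0 < t \<and> t < 1"
    using opposite_signs_ratio[OF h12] opposite_signs_ratio[OF h34] by (simp_all add: u_def t_def)
  have "orient p q z = orient p q r - u * (orient p q r - orient p q s)"
    unfolding z_def orient_comb by (simp add: algebra_simps)
  then have oz: "orient p q z = 0" using h12 by (auto simp: u_def)
  have "orient r s w = orient r s p - t * (orient r s p - orient r s q)"
    unfolding w_def orient_comb by (simp add: algebra_simps)
  then have ow: "orient r s w = 0" using h34 by (auto simp: t_def)
  have zs: "z \<in> closed_segment r s" using u01 unfolding in_segment z_def by (intro exI[of _ u]) simp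
  have ws: "w \<in> closed_segment p q" using t01 unfolding in_segment w_def by (intro exI[of _ t]) simp
  have "cross (q - p) (z - w) = 0"
    using oz orient_seg[OF ws] by (simp add: orient_def cross_def algebra_simps)
  moreover have "cross (s - r) (z - w) = 0"
    using ow orient_seg[OF zs] by (simp add: orient_def cross_def algebra_simps)
  moreover have "cross (q - p) (s - r) = orient p q s - orient p q r"
    by (simp add: orient_def cross_def algebra_simps)
  then have "cross (q - p) (s - r) \<noteq> 0" using h12 by auto
  ultimately have "z = w" using cross_unique by fastforce
  moreover have "z \<noteq> r" "z \<noteq> s" using oz h12 by auto
  ultimately show ?thesis using that ws zs by blast
qed

text \<open>We show that this
  is equivalent to a quantifier-free polynomial condition (segchar): no endpoint lies
  inside the other bar, the bars do not cross properly, and they are not the same bar.\<close>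
definition segcond :: "real^2 \<Rightarrow> real^2 \<Rightarrow> real^2 \<Rightarrow> real^2 \<Rightarrow> bool" where
  "segcond p q r s \<longleftrightarrow> closed_segment p q \<inter> closed_segment r s \<subseteq> {p, q} \<inter> {r, s}"

definition segchar :: "real^2 \<Rightarrow> real^2 \<Rightarrow> real^2 \<Rightarrow> real^2 \<Rightarrow> bool" where
  "segchar p q r s \<longleftrightarrow>
     (p \<in> closed_segment r s \<longrightarrow> p = r \<or> p = s) \<and> (q \<in> closed_segment r s \<longrightarrow> q = r \<or> q = s) \<and>
     (r \<in> closed_segment p q \<longrightarrow> r = p \<or> r = q) \<and> (s \<in> closed_segment p q \<longrightarrow> s = p \<or> s = q) \<and>
     \<not> (orient p q r * orient p q s < 0 \<and> orient r s p * orient r s q < 0) \<and>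
     \<not> (p \<noteq> q \<and> (p = r \<and> q = s \<or> p = s \<and> q = r))"

text \<open>If two bars share a point that is an endpoint of neither, either one bar separates
  the endpoints of the other (hence, by the orientation test, they cross properly) or they
  are collinear, and the collinear case was treated above.\<close>
lemma segchar_imp_segcond:
  assumes "segchar p q r s"
  shows "segcond p q r s"
  unfolding segcond_def
proof
  fix z assume "z \<in> closed_segment p q \<inter> closed_segment r s"
  then have z1: "z \<in> closed_segment p q" and z2: "z \<in> closed_segment r s" by auto
  note c = assms[unfolded segchar_def]
  have m1: "p \<in> closed_segment r s \<longrightarrow> p = r \<or> p = s" and m2: "q \<in> closed_segment r s \<longrightarrow> q = r \<or> q = s"
    and m3: "r \<in> closed_segment p q \<longrightarrow> r = p \<or> r = q" and m4: "s \<in> closed_segment p q \<longrightarrow> s = p \<or> s = q"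
    and cr: "\<not> (orient p q r * orient p q s < 0 \<and> orient r s p * orient r s q < 0)"
    and nc: "\<not> (p \<noteq> q \<and> (p = r \<and> q = s \<or> p = s \<and> q = r))"
    using c by blast+
  show "z \<in> {p, q} \<inter> {r, s}"
  proof (rule ccontr)
    assume "z \<notin> {p, q} \<inter> {r, s}"
    then have zn: "z \<noteq> p" "z \<noteq> q" "z \<noteq> r" "z \<noteq> s" using c z1 z2 by auto
    have pq: "p \<noteq> q" and rs: "r \<noteq> s" using z1 z2 zn by auto
    obtain t where t: "0 \<le> t" "t \<le> 1" "z = (1 - t) *\<^sub>R p + t *\<^sub>R q"
      using z1 by (auto simp: in_segment)
    obtain u where u: "0 \<le> u" "u \<le> 1" "z = (1 - u) *\<^sub>R r + u *\<^sub>R s"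
      using z2 by (auto simp: in_segment)
    have t01: "0 < t" "t < 1" and u01: "0 < u" "u < 1"
      using t u zn by (auto simp: order.strict_iff_order)
    have e1: "(1 - u) * orient p q r + u * orient p q s = 0"
      using orient_seg[OF z1] orient_comb[of p q u r s] u(3) by simp
    have e2: "(1 - t) * orient r s p + t * orient r s q = 0"
      using orient_seg[OF z2] orient_comb[of r s t p q] t(3) by simp
    show False
    proof (cases "orient p q r * orient p q s < 0")
      case True
      then have "orient r s p = 0 \<and> orient r s q = 0"
        using cr zero_comb[OF t01 e2] by auto
      then show False using collinear_overlap[OF rs _ _ z2 z1 zn(3,4,1,2) m3 m4 m1 m2] nc pq by blast
    next
      case False
      then have "orient p q r = 0 \<and> orient p q s = 0"
        using zero_comb[OF u01 e1] by auto
      then show False using collinear_overlap[OF pq _ _ z1 z2 zn m1 m2 m3 m4] nc pq by blast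
    qed
  qed
qed

text \<open>Conversely, two non-touching bars are not the same bar (its midpoint would be a common
  interior point) and do not cross properly.\<close>
lemma segcond_imp_segchar:
  assumes "segcond p q r s"
  shows "segchar p q r s"
proof -
  note c = assms[unfolded segcond_def]
  have "\<not> (p \<noteq> q \<and> (p = r \<and> q = s \<or> p = s \<and> q = r))"
  proof
    assume h: "p \<noteq> q \<and> (p = r \<and> q = s \<or> p = s \<and> q = r)"
    then have "closed_segment r s = closed_segment p q" by (metis closed_segment_commute)
    then have "midpoint p q \<in> {p, q}" using c midpoint_in_closed_segment[of p q] by blast
    then show False using h by auto
  qed
  moreover have "\<not> (orient p q r * orient p q s < 0 \<and> orient r s p * orient r s q < 0)"
  proof
    assume "orient p q r * orient p q s < 0 \<and> orient r s p * orient r s q < 0"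
    then obtain z where "z \<in> closed_segment p q" "z \<in> closed_segment r s" "z \<noteq> r" "z \<noteq> s"
      using proper_crossing by blast
    then show False using c by blast
  qed
  ultimately show ?thesis using c unfolding segchar_def by auto
qed

lemma segcond_iff_segchar: "segcond p q r s \<longleftrightarrow> segchar p q r s"
  using segcond_imp_segchar segchar_imp_segcond by blast

section \<open>An explicit formula for the order function\<close>

lemma dist_sq: "(q - p) \<bullet> (q - p) = (dist p q)^2"
  by (metis dist_norm norm_minus_commute power2_norm_eq_inner)

lemma xcoord_comb:
  "xcoord p q ((1 - t) *\<^sub>R r + t *\<^sub>R s) = (1 - t) * xcoord p q r + t * xcoord p q s"
proof -
  have "(1 - t) *\<^sub>R r + t *\<^sub>R s - p = (1 - t) *\<^sub>R (r - p) + t *\<^sub>R (s - p)"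
    by (simp add: algebra_simps)
  then show ?thesis unfolding xcoord_def by (simp add: inner_add_left add_divide_distrib)
qed

lemma ycoord_comb:
  "ycoord p q ((1 - t) *\<^sub>R r + t *\<^sub>R s) = (1 - t) * ycoord p q r + t * ycoord p q s"
  unfolding ycoord_def by (simp add: algebra_simps add_divide_distrib diff_divide_distrib)

lemma ycoord_cross: "ycoord p q z = cross (q - p) (z - p) / dist p q"
  by (simp add: ycoord_def cross_def)

lemma on_axis_in_segment:
  assumes y: "ycoord p q z = 0" and x: "0 < xcoord p q z" "xcoord p q z < dist p q"
  shows "z \<in> closed_segment p q" "z \<noteq> p" "z \<noteq> q"
proof -
  have L: "dist p q > 0" using x by linarith
  have "xcoord p q p = 0" "xcoord p q q = dist p q"
    by (simp_all add: xcoord_def dist_sq power2_eq_square)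
  then show "z \<noteq> p" "z \<noteq> q" using x by auto
  have c: "cross (q - p) (z - p) = 0" using y L by (simp add: ycoord_cross)
  have qp: "q - p \<noteq> 0" using L by auto
  define lam where "lam = xcoord p q z / dist p q"
  have "((z - p) \<bullet> (q - p)) / ((q - p) \<bullet> (q - p)) = lam"
    using L by (simp add: lam_def xcoord_def dist_sq power2_eq_square)
  then have zp: "z - p = lam *\<^sub>R (q - p)" using cross_zero_param[OF c qp] by simp
  have "0 \<le> lam" "lam \<le> 1" using x L by (simp_all add: lam_def divide_simps)
  moreover have "z = (1 - lam) *\<^sub>R p + lam *\<^sub>R q" using zp by (simp add: algebra_simps)
  ultimately show "z \<in> closed_segment p q" unfolding in_segment by blast
qed

text \<open>The abscissae shared by the two bars form the interval [loF, hiF]; above it the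
  second bar is the graph of the affine function YF, whose value at the midpoint is YmF.\<close>
definition loF :: "real^2 \<Rightarrow> real^2 \<Rightarrow> real^2 \<Rightarrow> real^2 \<Rightarrow> real" where
  "loF p q r s = max (min (xcoord p q r) (xcoord p q s)) 0"

definition hiF :: "real^2 \<Rightarrow> real^2 \<Rightarrow> real^2 \<Rightarrow> real^2 \<Rightarrow> real" where
  "hiF p q r s = min (max (xcoord p q r) (xcoord p q s)) (dist p q)"

definition YF :: "real^2 \<Rightarrow> real^2 \<Rightarrow> real^2 \<Rightarrow> real^2 \<Rightarrow> real \<Rightarrow> real" where
  "YF p q r s x = ycoord p q r +
     ((x - xcoord p q r) / (xcoord p q s - xcoord p q r)) * (ycoord p q s - ycoord p q r)"

definition YmF :: "real^2 \<Rightarrow> real^2 \<Rightarrow> real^2 \<Rightarrow> real^2 \<Rightarrow> real" where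
  "YmF p q r s = YF p q r s ((loF p q r s + hiF p q r s) / 2)"

definition shadow :: "real^2 \<Rightarrow> real^2 \<Rightarrow> real^2 \<Rightarrow> real^2 \<Rightarrow> (real \<Rightarrow> bool) \<Rightarrow> real set" where
  "shadow p q r s P =
     {x. x \<in> {0..dist p q} \<and> (\<exists>z\<in>closed_segment r s. xcoord p q z = x \<and> P (ycoord p q z))}"

lemma Ord_shadow:
  "Ord p q r s = measure lebesgue (shadow p q r s (\<lambda>y. 0 \<le> y))
               - measure lebesgue (shadow p q r s (\<lambda>y. y \<le> 0))"
  by (simp add: Ord_def d_plus_def d_minus_def shadow_def)

lemma loF_hiF_bounds:
  "0 \<le> loF p q r s" "hiF p q r s \<le> dist p q"
  "min (xcoord p q r) (xcoord p q s) \<le> loF p q r s"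
  "hiF p q r s \<le> max (xcoord p q r) (xcoord p q s)"
  by (simp_all add: loF_def hiF_def)

lemma loF_less_hiF_imp:
  assumes "loF p q r s < hiF p q r s"
  shows "xcoord p q r \<noteq> xcoord p q s" "p \<noteq> q"
  using assms loF_hiF_bounds[of p q r s] by auto

lemma xcoord_segment_between:
  assumes "z \<in> closed_segment r s"
  shows "min (xcoord p q r) (xcoord p q s) \<le> xcoord p q z \<and>
         xcoord p q z \<le> max (xcoord p q r) (xcoord p q s)"
proof -
  obtain t where t: "0 \<le> t" "t \<le> 1" "z = (1 - t) *\<^sub>R r + t *\<^sub>R s"
    using assms by (auto simp: in_segment)
  define a b where "a = xcoord p q r" "b = xcoord p q s"
  have "xcoord p q z = a + t * (b - a)"
    unfolding t(3) xcoord_comb by (simp add: a_b_def algebra_simps)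
  moreover have "min a b \<le> a + t * (b - a) \<and> a + t * (b - a) \<le> max a b"
  proof (cases "a \<le> b")
    case True
    then have "0 \<le> t * (b - a)" "t * (b - a) \<le> b - a" using t by (simp_all add: mult_left_le_one_le)
    then show ?thesis using True by simp
  next
    case False
    then have "t * (b - a) \<le> 0" "t * (a - b) \<le> a - b"
      using t by (simp_all add: mult_nonneg_nonpos mult_left_le_one_le)
    then show ?thesis using False by (simp add: algebra_simps)
  qed
  ultimately show ?thesis by (simp add: a_b_def)
qed

lemma shadow_sub: "shadow p q r s P \<subseteq> {loF p q r s..hiF p q r s}"
  using xcoord_segment_between by (fastforce simp: shadow_def loF_def hiF_def)

lemma segment_height:
  assumes "xcoord p q r \<noteq> xcoord p q s" "z \<in> closed_segment r s"
  shows "ycoord p q z = YF p q r s (xcoord p q z)"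
proof -
  obtain t where t: "z = (1 - t) *\<^sub>R r + t *\<^sub>R s" using assms(2) unfolding in_segment by blast
  have "xcoord p q z - xcoord p q r = t * (xcoord p q s - xcoord p q r)"
    unfolding t xcoord_comb by (simp add: algebra_simps)
  then have "t = (xcoord p q z - xcoord p q r) / (xcoord p q s - xcoord p q r)"
    using assms(1) by (simp add: field_simps)
  then show ?thesis unfolding YF_def t ycoord_comb by (simp add: algebra_simps)
qed

lemma segment_point_over:
  assumes "loF p q r s < x" "x < hiF p q r s"
  obtains z where "z \<in> closed_segment r s" "xcoord p q z = x"
proof -
  define a b where "a = xcoord p q r" "b = xcoord p q s"
  have ab: "a \<noteq> b" and x: "min a b < x" "x < max a b"
    using assms loF_less_hiF_imp[of p q r s] loF_hiF_bounds[of p q r s] by (auto simp: a_b_def)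
  define t where "t = (x - a) / (b - a)"
  have "0 \<le> t \<and> t \<le> 1"
    using x ab by (cases "a < b") (auto simp: t_def divide_simps min_def max_def)
  then have "(1 - t) *\<^sub>R r + t *\<^sub>R s \<in> closed_segment r s" unfolding in_segment by blast
  moreover have "xcoord p q ((1 - t) *\<^sub>R r + t *\<^sub>R s) = a + t * (b - a)"
    unfolding xcoord_comb by (simp add: a_b_def algebra_simps)
  moreover have "a + t * (b - a) = x" using ab by (simp add: t_def)
  ultimately show ?thesis using that by blast
qed

lemma shadow_graph:
  assumes "loF p q r s < x" "x < hiF p q r s"
  shows "x \<in> shadow p q r s P \<longleftrightarrow> P (YF p q r s x)"
proof -
  have ne: "xcoord p q r \<noteq> xcoord p q s" using assms loF_less_hiF_imp by force
  have "x \<in> {0..dist p q}" using assms loF_hiF_bounds[of p q r s] by auto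
  moreover obtain z where "z \<in> closed_segment r s" "xcoord p q z = x"
    using segment_point_over[OF assms] .
  ultimately show ?thesis using segment_height[OF ne] by (auto simp: shadow_def)
qed

lemma YF_nonzero:
  assumes H: "closed_segment p q \<inter> closed_segment r s \<subseteq> {p, q}"
    and x: "loF p q r s < x" "x < hiF p q r s"
  shows "YF p q r s x \<noteq> 0"
proof
  assume Y0: "YF p q r s x = 0"
  have ne: "xcoord p q r \<noteq> xcoord p q s" using x loF_less_hiF_imp by force
  obtain z where z: "z \<in> closed_segment r s" "xcoord p q z = x"
    using segment_point_over[OF x] .
  have "0 < xcoord p q z" "xcoord p q z < dist p q"
    using z(2) x loF_hiF_bounds[of p q r s] by linarith+
  moreover have "ycoord p q z = 0" using segment_height[OF ne z(1)] z(2) Y0 by simp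
  ultimately have "z \<in> closed_segment p q" "z \<notin> {p, q}" using on_axis_in_segment by auto
  then show False using H z(1) by blast
qed

lemma YmF_nonzero:
  assumes "closed_segment p q \<inter> closed_segment r s \<subseteq> {p, q}" "loF p q r s < hiF p q r s"
  shows "YmF p q r s \<noteq> 0"
  unfolding YmF_def using assms by (intro YF_nonzero) auto

text \<open>Consequently, by the intermediate value theorem, YF has constant sign there.\<close>
lemma YF_sgn:
  assumes H: "closed_segment p q \<inter> closed_segment r s \<subseteq> {p, q}"
    and x: "loF p q r s < x" "x < hiF p q r s"
  shows "sgn (YF p q r s x) = sgn (YmF p q r s)"
proof -
  define m where "m = (loF p q r s + hiF p q r s) / 2"
  have m: "loF p q r s < m" "m < hiF p q r s" using x by (simp_all add: m_def)
  have cont: "continuous_on {min x m..max x m} (YF p q r s)"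
    unfolding YF_def[abs_def] using loF_less_hiF_imp(1)[of p q r s] x
    by (intro continuous_intros) auto
  have "\<forall>y\<in>{min x m..max x m}. YF p q r s y \<noteq> 0"
    using YF_nonzero[OF H] x m by auto
  then have "\<not> (\<exists>y\<in>{min x m..max x m}. YF p q r s y = 0)" by blast
  then have "sgn (YF p q r s (min x m)) = sgn (YF p q r s (max x m))"
    using IVT'[of "YF p q r s" "min x m" 0 "max x m"] IVT2'[of "YF p q r s" "max x m" 0 "min x m"] cont
    by (force simp: sgn_if)
  then show ?thesis by (cases "x \<le> m") (simp_all add: YmF_def m_def min_def max_def)
qed

text \<open>Lebesgue measure of a (possibly non-measurable) subset of an interval.\<close>
lemma measure_le_interval:
  assumes "S \<subseteq> {lo..hi}"
  shows "measure lebesgue S \<le> max 0 (hi - lo)"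
proof (cases "S \<in> sets lebesgue")
  case True
  then have "measure lebesgue S \<le> measure lebesgue {lo..hi}"
    by (intro measure_mono_fmeasurable[OF assms]) simp_all
  then show ?thesis by (cases "lo \<le> hi") (simp_all add: content_real)
qed (simp add: measure_notin_sets)

lemma measure_all_or_nothing:
  assumes sub: "S \<subseteq> {lo..hi}" and lohi: "lo < hi"
    and iff: "\<And>x. lo < x \<Longrightarrow> x < hi \<Longrightarrow> x \<in> S \<longleftrightarrow> c"
  shows "measure lebesgue S = (if c then hi - lo else 0)"
proof (cases c)
  case True
  then have sd: "{lo..hi} - S \<union> (S - {lo..hi}) \<subseteq> {lo, hi}" using sub iff by force
  have "negligible ({lo..hi} - S \<union> (S - {lo..hi}))" by (rule negligible_subset[OF _ sd]) auto
  then have "measure lebesgue S = measure lebesgue {lo..hi}"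
    by (intro measure_negligible_symdiff) auto
  then show ?thesis using True lohi by (simp add: content_real)
next
  case False
  then have sd: "S \<subseteq> {lo, hi}" using sub iff by force
  have "negligible S" by (rule negligible_subset[OF _ sd]) auto
  then show ?thesis using False by (simp add: negligible_imp_measure0)
qed

text \<open>Both d_plus and d_minus are at most the length of the shared interval.\<close>
lemma Ord_bound: "\<bar>Ord p q r s\<bar> \<le> max 0 (hiF p q r s - loF p q r s)"
  using measure_le_interval[OF shadow_sub, of p q r s "\<lambda>y. 0 \<le> y"]
    measure_le_interval[OF shadow_sub, of p q r s "\<lambda>y. y \<le> 0"]
    measure_nonneg[of lebesgue "shadow p q r s (\<lambda>y. 0 \<le> y)"]
    measure_nonneg[of lebesgue "shadow p q r s (\<lambda>y. y \<le> 0)"]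
  unfolding Ord_shadow by linarith

lemma Ord_le_dist: "\<bar>Ord p q r s\<bar> \<le> dist p q"
  using Ord_bound[of p q r s] loF_hiF_bounds[of p q r s] by (simp add: max_def split: if_splits)

lemma Ord_degenerate: "hiF p q r s \<le> loF p q r s \<Longrightarrow> Ord p q r s = 0"
  using Ord_bound[of p q r s] by simp

text \<open>The explicit formula: if the second bar meets the first only in its endpoints, one of
  the two shadows is the whole shared interval and the other is negligible.\<close>
lemma Ord_formula:
  assumes H: "closed_segment p q \<inter> closed_segment r s \<subseteq> {p, q}"
    and lohi: "loF p q r s < hiF p q r s"
  shows "Ord p q r s = sgn (YmF p q r s) * (hiF p q r s - loF p q r s)"
proof -
  have Ym0: "YmF p q r s \<noteq> 0" using YmF_nonzero[OF H lohi] .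
  have "0 \<le> YF p q r s x \<longleftrightarrow> 0 < YmF p q r s" "YF p q r s x \<le> 0 \<longleftrightarrow> YmF p q r s < 0"
    if "loF p q r s < x" "x < hiF p q r s" for x
    using YF_sgn[OF H that] YF_nonzero[OF H that] by (auto simp: sgn_if split: if_splits)
  then have "measure lebesgue (shadow p q r s (\<lambda>y. 0 \<le> y)) =
               (if 0 < YmF p q r s then hiF p q r s - loF p q r s else 0)"
    and "measure lebesgue (shadow p q r s (\<lambda>y. y \<le> 0)) =
               (if YmF p q r s < 0 then hiF p q r s - loF p q r s else 0)"
    by (intro measure_all_or_nothing shadow_sub lohi; simp add: shadow_graph)+
  then show ?thesis using Ym0 unfolding Ord_shadow by (auto simp: sgn_if)
qed

section \<open>Continuity of the order function on non-crossing pairs of bars\<close>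

lemma tendsto_xcoord:
  assumes "(fp \<longlongrightarrow> p0) F" "(fq \<longlongrightarrow> q0) F" "(g \<longlongrightarrow> z0) F" "p0 \<noteq> q0"
  shows "((\<lambda>C. xcoord (fp C) (fq C) (g C)) \<longlongrightarrow> xcoord p0 q0 z0) F"
  unfolding xcoord_def using assms(4) by (intro tendsto_intros assms) auto

lemma tendsto_ycoord:
  assumes "(fp \<longlongrightarrow> p0) F" "(fq \<longlongrightarrow> q0) F" "(g \<longlongrightarrow> z0) F" "p0 \<noteq> q0"
  shows "((\<lambda>C. ycoord (fp C) (fq C) (g C)) \<longlongrightarrow> ycoord p0 q0 z0) F"
  unfolding ycoord_def using assms(4) by (intro tendsto_intros assms) auto

lemma tendsto_loF_hiF:
  assumes "(fp \<longlongrightarrow> p0) F" "(fq \<longlongrightarrow> q0) F" "(fr \<longlongrightarrow> r0) F" "(fs \<longlongrightarrow> s0) F" "p0 \<noteq> q0"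
  shows "((\<lambda>C. loF (fp C) (fq C) (fr C) (fs C)) \<longlongrightarrow> loF p0 q0 r0 s0) F"
    and "((\<lambda>C. hiF (fp C) (fq C) (fr C) (fs C)) \<longlongrightarrow> hiF p0 q0 r0 s0) F"
proof -
  have xr: "((\<lambda>C. xcoord (fp C) (fq C) (fr C)) \<longlongrightarrow> xcoord p0 q0 r0) F"
    and xs: "((\<lambda>C. xcoord (fp C) (fq C) (fs C)) \<longlongrightarrow> xcoord p0 q0 s0) F"
    using assms by (simp_all add: tendsto_xcoord)
  then show "((\<lambda>C. loF (fp C) (fq C) (fr C) (fs C)) \<longlongrightarrow> loF p0 q0 r0 s0) F"
    unfolding loF_def by (intro tendsto_intros)
  show "((\<lambda>C. hiF (fp C) (fq C) (fr C) (fs C)) \<longlongrightarrow> hiF p0 q0 r0 s0) F"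
    unfolding hiF_def by (intro tendsto_intros xr xs assms)
qed

lemma tendsto_YmF:
  assumes "(fp \<longlongrightarrow> p0) F" "(fq \<longlongrightarrow> q0) F" "(fr \<longlongrightarrow> r0) F" "(fs \<longlongrightarrow> s0) F" "p0 \<noteq> q0"
    and "xcoord p0 q0 r0 \<noteq> xcoord p0 q0 s0"
  shows "((\<lambda>C. YmF (fp C) (fq C) (fr C) (fs C)) \<longlongrightarrow> YmF p0 q0 r0 s0) F"
proof -
  have "((\<lambda>C. xcoord (fp C) (fq C) (fr C)) \<longlongrightarrow> xcoord p0 q0 r0) F"
    and "((\<lambda>C. xcoord (fp C) (fq C) (fs C)) \<longlongrightarrow> xcoord p0 q0 s0) F"
    and "((\<lambda>C. ycoord (fp C) (fq C) (fr C)) \<longlongrightarrow> ycoord p0 q0 r0) F"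
    and "((\<lambda>C. ycoord (fp C) (fq C) (fs C)) \<longlongrightarrow> ycoord p0 q0 s0) F"
    using assms by (simp_all add: tendsto_xcoord tendsto_ycoord)
  then show ?thesis
    unfolding YmF_def YF_def using assms(6)
    by (intro tendsto_intros tendsto_loF_hiF[OF assms(1-5)]) auto
qed

text \<open>Near a degenerate configuration (first bar a point, or empty shared interval) Ord is
  squeezed to 0 by the bounds on its absolute value.\<close>
lemma tendsto_Ord_degenerate:
  assumes lim: "(fp \<longlongrightarrow> p0) F" "(fq \<longlongrightarrow> q0) F" "(fr \<longlongrightarrow> r0) F" "(fs \<longlongrightarrow> s0) F"
    and deg: "p0 = q0 \<or> hiF p0 q0 r0 s0 \<le> loF p0 q0 r0 s0"
  shows "((\<lambda>C. Ord (fp C) (fq C) (fr C) (fs C)) \<longlongrightarrow> 0) F"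
proof (cases "p0 = q0")
  case True
  show ?thesis
  proof (rule Lim_null_comparison)
    show "\<forall>\<^sub>F C in F. norm (Ord (fp C) (fq C) (fr C) (fs C)) \<le> dist (fp C) (fq C)"
      by (simp add: Ord_le_dist)
    show "((\<lambda>C. dist (fp C) (fq C)) \<longlongrightarrow> 0) F"
      using tendsto_dist[OF lim(1,2)] True by simp
  qed
next
  case False
  show ?thesis
  proof (rule Lim_null_comparison)
    show "\<forall>\<^sub>F C in F. norm (Ord (fp C) (fq C) (fr C) (fs C))
        \<le> max 0 (hiF (fp C) (fq C) (fr C) (fs C) - loF (fp C) (fq C) (fr C) (fs C))"
      by (simp add: Ord_bound)
    have "((\<lambda>C. max 0 (hiF (fp C) (fq C) (fr C) (fs C) - loF (fp C) (fq C) (fr C) (fs C)))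
        \<longlongrightarrow> max 0 (hiF p0 q0 r0 s0 - loF p0 q0 r0 s0)) F"
      by (intro tendsto_intros tendsto_loF_hiF lim False)
    then show "((\<lambda>C. max 0 (hiF (fp C) (fq C) (fr C) (fs C) - loF (fp C) (fq C) (fr C) (fs C)))
        \<longlongrightarrow> 0) F"
      using deg False by simp
  qed
qed

text \<open>At a configuration with nondegenerate shared interval, the explicit formula holds
  nearby (for non-crossing bars) and its ingredients are continuous, the sign being taken of
  a nonzero quantity.\<close>
lemma tendsto_Ord_proper:
  assumes lim: "(fp \<longlongrightarrow> p0) F" "(fq \<longlongrightarrow> q0) F" "(fr \<longlongrightarrow> r0) F" "(fs \<longlongrightarrow> s0) F"
    and lohi: "loF p0 q0 r0 s0 < hiF p0 q0 r0 s0"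
    and H0: "closed_segment p0 q0 \<inter> closed_segment r0 s0 \<subseteq> {p0, q0}"
    and H: "\<forall>\<^sub>F C in F. closed_segment (fp C) (fq C) \<inter> closed_segment (fr C) (fs C) \<subseteq> {fp C, fq C}"
  shows "((\<lambda>C. Ord (fp C) (fq C) (fr C) (fs C)) \<longlongrightarrow> Ord p0 q0 r0 s0) F"
proof -
  define lo hi ym where
    "lo C = loF (fp C) (fq C) (fr C) (fs C)" and "hi C = hiF (fp C) (fq C) (fr C) (fs C)"
    and "ym C = YmF (fp C) (fq C) (fr C) (fs C)" for C
  have pq: "p0 \<noteq> q0" and rs: "xcoord p0 q0 r0 \<noteq> xcoord p0 q0 s0"
    using loF_less_hiF_imp[OF lohi] by simp_all
  have "YmF p0 q0 r0 s0 \<noteq> 0" using YmF_nonzero[OF H0 lohi] .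
  then have lim_formula: "((\<lambda>C. sgn (ym C) * (hi C - lo C))
      \<longlongrightarrow> sgn (YmF p0 q0 r0 s0) * (hiF p0 q0 r0 s0 - loF p0 q0 r0 s0)) F"
    unfolding ym_def lo_def hi_def by (intro tendsto_intros tendsto_YmF tendsto_loF_hiF lim pq rs)
  have "((\<lambda>C. hi C - lo C) \<longlongrightarrow> hiF p0 q0 r0 s0 - loF p0 q0 r0 s0) F"
    unfolding lo_def hi_def by (intro tendsto_intros tendsto_loF_hiF lim pq)
  then have "\<forall>\<^sub>F C in F. 0 < hi C - lo C"
    by (rule order_tendstoD(1)) (use lohi in auto)
  with H have "\<forall>\<^sub>F C in F. sgn (ym C) * (hi C - lo C) = Ord (fp C) (fq C) (fr C) (fs C)"
    by eventually_elim (simp add: ym_def lo_def hi_def Ord_formula)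
  with lim_formula show ?thesis by (simp add: Lim_transform_eventually Ord_formula[OF H0 lohi])
qed

lemma continuous_on_Ord:
  fixes fp fq fr fs :: "'a::topological_space \<Rightarrow> real^2"
  assumes cont: "continuous_on X fp" "continuous_on X fq" "continuous_on X fr" "continuous_on X fs"
    and W: "\<And>C. C \<in> X \<Longrightarrow> closed_segment (fp C) (fq C) \<inter> closed_segment (fr C) (fs C) \<subseteq> {fp C, fq C}"
  shows "continuous_on X (\<lambda>C. Ord (fp C) (fq C) (fr C) (fs C))"
  unfolding continuous_on_def
proof
  fix C0 assume C0: "C0 \<in> X"
  have lim: "(fp \<longlongrightarrow> fp C0) (at C0 within X)" "(fq \<longlongrightarrow> fq C0) (at C0 within X)"
    "(fr \<longlongrightarrow> fr C0) (at C0 within X)" "(fs \<longlongrightarrow> fs C0) (at C0 within X)"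
    using cont C0 by (auto simp: continuous_on_def)
  show "((\<lambda>C. Ord (fp C) (fq C) (fr C) (fs C)) \<longlongrightarrow> Ord (fp C0) (fq C0) (fr C0) (fs C0)) (at C0 within X)"
  proof (cases "loF (fp C0) (fq C0) (fr C0) (fs C0) < hiF (fp C0) (fq C0) (fr C0) (fs C0)")
    case True
    have "\<forall>\<^sub>F C in at C0 within X. C \<in> X" by (simp add: eventually_at_filter)
    then have "\<forall>\<^sub>F C in at C0 within X.
        closed_segment (fp C) (fq C) \<inter> closed_segment (fr C) (fs C) \<subseteq> {fp C, fq C}"
      by eventually_elim (rule W)
    then show ?thesis by (intro tendsto_Ord_proper lim True W C0)
  next
    case False
    then have "Ord (fp C0) (fq C0) (fr C0) (fs C0) = 0" by (simp add: Ord_degenerate)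
    then show ?thesis using tendsto_Ord_degenerate[OF lim] False by simp
  qed
qed

definition ppoly :: "('a::euclidean_space \<Rightarrow> real^2) \<Rightarrow> bool" where
  "ppoly P \<longleftrightarrow> (\<lambda>y. P y $ 1) \<in> poly_fun \<and> (\<lambda>y. P y $ 2) \<in> poly_fun"

lemma ppoly_bounded_linear:
  fixes f :: "'a::euclidean_space \<Rightarrow> real^2"
  assumes "bounded_linear f"
  shows "ppoly f"
proof -
  have "(\<lambda>y. f y $ k) \<in> poly_fun" for k
    by (intro poly_linear bounded_linear.linear bounded_linear_compose[OF bounded_linear_vec_nth assms])
  then show ?thesis by (simp add: ppoly_def)
qed

lemma ppoly_diff: "ppoly P \<Longrightarrow> ppoly Q \<Longrightarrow> ppoly (\<lambda>y. P y - Q y)"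
  unfolding ppoly_def by (simp add: poly_diff)

lemma poly_inner: "ppoly P \<Longrightarrow> ppoly Q \<Longrightarrow> (\<lambda>y. P y \<bullet> Q y) \<in> poly_fun"
  unfolding ppoly_def inner2 by (intro poly_fun.add poly_fun.mult) auto

lemma poly_cross: "ppoly P \<Longrightarrow> ppoly Q \<Longrightarrow> (\<lambda>y. cross (P y) (Q y)) \<in> poly_fun"
  unfolding ppoly_def cross_def by (intro poly_diff poly_fun.mult) auto

lemma poly_orient:
  "ppoly P \<Longrightarrow> ppoly Q \<Longrightarrow> ppoly R \<Longrightarrow> (\<lambda>y. orient (P y) (Q y) (R y)) \<in> poly_fun"
  unfolding orient_def by (intro poly_cross ppoly_diff)

lemma sa_peq: "ppoly P \<Longrightarrow> ppoly Q \<Longrightarrow> sa (\<lambda>y. P y = Q y)"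
  unfolding ppoly_def vec2_eq by (intro sa_conj sa_eq) auto

lemma sa_in_segment:
  "ppoly Z \<Longrightarrow> ppoly R \<Longrightarrow> ppoly S \<Longrightarrow> sa (\<lambda>y. Z y \<in> closed_segment (R y) (S y))"
  unfolding in_segment_iff by (intro sa_conj sa_eq sa_le poly_cross poly_inner ppoly_diff poly_fun.const)

lemma sa_segcond:
  assumes "ppoly P" "ppoly Q" "ppoly R" "ppoly S"
  shows "sa (\<lambda>y. segcond (P y) (Q y) (R y) (S y))"
  unfolding segcond_iff_segchar segchar_def using assms
  by (intro sa_conj sa_imp sa_disj sa_not sa_in_segment sa_peq sa_less poly_fun.mult poly_orient
      poly_fun.const)

text \<open>The graph of Ord, written with the polynomial quantities D = |pq|^2, alpha and beta (the
  abscissae of r and s times |pq|) and gr, gs (their ordinates times |pq|).  Phi2 takes the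
  shared interval [lo, hi] (also scaled by |pq|) as extra arguments, and Phi computes it.  The
  second disjunct says that v is plus or minus hi - lo with the sign of the height of the
  second bar over the midpoint of the shared interval (times a positive factor).\<close>
definition Phi2 :: "real \<Rightarrow> real \<Rightarrow> real \<Rightarrow> real \<Rightarrow> real \<Rightarrow> real \<Rightarrow> real \<Rightarrow> real \<Rightarrow> bool" where
  "Phi2 D \<alpha> \<beta> gr gs v lo hi \<longleftrightarrow> ((D = 0 \<or> hi \<le> lo) \<and> v = 0) \<or>
     (D \<noteq> 0 \<and> lo < hi \<and> v * v * D = (hi - lo) * (hi - lo) \<and>
      0 < v * (2 * gr * (\<beta> - \<alpha>) + (lo + hi - 2 * \<alpha>) * (gs - gr)) * (\<beta> - \<alpha>))"

definition Phi :: "real \<Rightarrow> real \<Rightarrow> real \<Rightarrow> real \<Rightarrow> real \<Rightarrow> real \<Rightarrow> bool" where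
  "Phi D \<alpha> \<beta> gr gs v \<longleftrightarrow> Phi2 D \<alpha> \<beta> gr gs v (max (min \<alpha> \<beta>) 0) (min (max \<alpha> \<beta>) D)"

lemma sa_Phi2:
  assumes "D \<in> poly_fun" "A \<in> poly_fun" "B \<in> poly_fun" "G \<in> poly_fun" "H \<in> poly_fun"
    "V \<in> poly_fun" "Lo \<in> poly_fun" "Hi \<in> poly_fun"
  shows "sa (\<lambda>y. Phi2 (D y) (A y) (B y) (G y) (H y) (V y) (Lo y) (Hi y))"
  unfolding Phi2_def using assms
  by (intro sa_conj sa_disj sa_not sa_eq sa_le sa_less poly_fun.mult poly_fun.add poly_diff
      poly_fun.const)

text \<open>min and max are eliminated by a case distinction on the order of their arguments.\<close>
lemma split_lo_hi:
  "P (max (min a b) 0) (min (max a b) D) \<longleftrightarrow>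
   (a \<le> b \<longrightarrow> (a \<le> 0 \<longrightarrow> (b \<le> D \<longrightarrow> P 0 b) \<and> (\<not> b \<le> D \<longrightarrow> P 0 D)) \<and>
               (\<not> a \<le> 0 \<longrightarrow> (b \<le> D \<longrightarrow> P a b) \<and> (\<not> b \<le> D \<longrightarrow> P a D))) \<and>
   (\<not> a \<le> b \<longrightarrow> (b \<le> 0 \<longrightarrow> (a \<le> D \<longrightarrow> P 0 a) \<and> (\<not> a \<le> D \<longrightarrow> P 0 D)) \<and>
               (\<not> b \<le> 0 \<longrightarrow> (a \<le> D \<longrightarrow> P b a) \<and> (\<not> a \<le> D \<longrightarrow> P b D)))"
  by (simp add: min_def max_def)

lemma sa_Phi:
  assumes "D \<in> poly_fun" "A \<in> poly_fun" "B \<in> poly_fun" "G \<in> poly_fun" "H \<in> poly_fun"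
    "V \<in> poly_fun"
  shows "sa (\<lambda>y. Phi (D y) (A y) (B y) (G y) (H y) (V y))"
  unfolding Phi_def split_lo_hi[where P = "Phi2 _ _ _ _ _ _"] using assms
  by (intro sa_conj sa_imp sa_not sa_le sa_Phi2 poly_fun.const)

lemma Phi2_scaled:
  fixes L :: real
  assumes L: "L > 0"
  shows "Phi2 (L * L) (a * L) (b * L) (ya * L) (yb * L) v (lo * L) (hi * L) \<longleftrightarrow>
         (hi \<le> lo \<and> v = 0) \<or>
         (lo < hi \<and> v * v = (hi - lo) * (hi - lo) \<and>
          0 < v * (2 * ya * (b - a) + (lo + hi - 2 * a) * (yb - ya)) * (b - a))"
proof -
  have "v * v * (L * L) = (hi * L - lo * L) * (hi * L - lo * L) \<longleftrightarrow>
        (v * v - (hi - lo) * (hi - lo)) * (L * L) = 0"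
    by (simp add: algebra_simps)
  then have sq: "v * v * (L * L) = (hi * L - lo * L) * (hi * L - lo * L) \<longleftrightarrow>
        v * v = (hi - lo) * (hi - lo)"
    using L by simp
  have e: "v * (2 * (ya * L) * (b * L - a * L) + (lo * L + hi * L - 2 * (a * L)) * (yb * L - ya * L))
          * (b * L - a * L)
        = (L * L * L) * (v * (2 * ya * (b - a) + (lo + hi - 2 * a) * (yb - ya)) * (b - a))"
    by (simp add: algebra_simps)
  have L3: "L * L * L > 0" using L by simp
  have pos: "0 < v * (2 * (ya * L) * (b * L - a * L) + (lo * L + hi * L - 2 * (a * L))
          * (yb * L - ya * L)) * (b * L - a * L) \<longleftrightarrow>
        0 < v * (2 * ya * (b - a) + (lo + hi - 2 * a) * (yb - ya)) * (b - a)"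
    unfolding e using L3 by (metis mult_pos_pos zero_less_mult_pos)
  show ?thesis unfolding Phi2_def sq pos using L by auto
qed

lemma sgn_char:
  fixes k c Y v :: real
  assumes "k > 0" "c > 0" "Y \<noteq> 0"
  shows "v = sgn Y * k \<longleftrightarrow> (v * v = k * k \<and> 0 < v * (c * Y))"
proof
  assume "v = sgn Y * k"
  then show "v * v = k * k \<and> 0 < v * (c * Y)"
    using assms by (cases "Y > 0") (auto simp: sgn_if mult_pos_pos mult_neg_neg mult_pos_neg)
next
  assume h: "v * v = k * k \<and> 0 < v * (c * Y)"
  then have "(v - k) * (v + k) = 0" by (simp add: algebra_simps)
  then have "v = k \<or> v = - k" by (simp add: eq_neg_iff_add_eq_0)
  then show "v = sgn Y * k"
    using h assms by (cases "Y > 0") (auto simp: sgn_if zero_less_mult_iff mult_less_0_iff)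
qed

lemma max_min_scale: "(L::real) > 0 \<Longrightarrow> max (min (a * L) (b * L)) 0 = max (min a b) 0 * L"
  by (simp add: min_def max_def mult_le_0_iff)

lemma min_max_scale: "(L::real) > 0 \<Longrightarrow> min (max (a * L) (b * L)) (c * L) = min (max a b) c * L"
  by (simp add: min_def max_def)

text \<open>For a nondegenerate shared interval, the formula for Ord as a sign condition: the
  height over the midpoint is proportional to a polynomial in the frame coordinates.\<close>
lemma Ord_sign_condition:
  assumes H: "closed_segment p q \<inter> closed_segment r s \<subseteq> {p, q}"
    and frame: "a = xcoord p q r" "b = xcoord p q s" "ya = ycoord p q r" "yb = ycoord p q s"
      "lo = loF p q r s" "hi = hiF p q r s"
    and lohi: "lo < hi"
  shows "v = Ord p q r s \<longleftrightarrow>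
         v * v = (hi - lo) * (hi - lo) \<and>
         0 < v * (2 * ya * (b - a) + (lo + hi - 2 * a) * (yb - ya)) * (b - a)"
proof -
  define Ym where "Ym = YmF p q r s"
  have ab: "b - a \<noteq> 0" using loF_less_hiF_imp(1)[of p q r s] lohi frame by auto
  have "2 * ya * (b - a) + (lo + hi - 2 * a) * (yb - ya) = 2 * (b - a) * Ym"
    using ab by (simp add: Ym_def YmF_def YF_def frame field_simps)
  then have prod_eq: "v * (2 * ya * (b - a) + (lo + hi - 2 * a) * (yb - ya)) * (b - a)
             = v * ((2 * (b - a) * (b - a)) * Ym)"
    by (simp add: ac_simps)
  have "(b - a) * (b - a) > 0" using ab by (metis not_real_square_gt_zero)
  then have cpos: "2 * (b - a) * (b - a) > 0" by (metis mult.assoc mult_pos_pos zero_less_numeral)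
  have Ym0: "Ym \<noteq> 0" using YmF_nonzero[OF H] lohi by (simp add: Ym_def frame)
  have "Ord p q r s = sgn Ym * (hi - lo)" using Ord_formula[OF H] lohi by (simp add: Ym_def frame)
  then show ?thesis
    unfolding prod_eq using sgn_char[of "hi - lo" "2 * (b - a) * (b - a)" Ym v] cpos Ym0 lohi
    by auto
qed

lemma Ord_Phi:
  assumes H: "closed_segment p q \<inter> closed_segment r s \<subseteq> {p, q}"
  shows "v = Ord p q r s \<longleftrightarrow>
    Phi ((q - p) \<bullet> (q - p)) ((r - p) \<bullet> (q - p)) ((s - p) \<bullet> (q - p))
        (cross (q - p) (r - p)) (cross (q - p) (s - p)) v"
proof (cases "p = q")
  case True
  then have "Ord p q r s = 0" using Ord_le_dist[of p q r s] by simp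
  then show ?thesis using True by (simp add: Phi_def Phi2_def)
next
  case False
  define L where "L = dist p q"
  define a b ya yb where "a = xcoord p q r" "b = xcoord p q s" "ya = ycoord p q r" "yb = ycoord p q s"
  define lo hi where "lo = loF p q r s" "hi = hiF p q r s"
  have L: "L > 0" using False by (simp add: L_def)
  have "(q - p) \<bullet> (q - p) = L * L" "(r - p) \<bullet> (q - p) = a * L" "(s - p) \<bullet> (q - p) = b * L"
    "cross (q - p) (r - p) = ya * L" "cross (q - p) (s - p) = yb * L"
    using L by (simp_all add: L_def a_b_ya_yb_def xcoord_def ycoord_cross dist_sq power2_eq_square)
  moreover have "max (min (a * L) (b * L)) 0 = lo * L" "min (max (a * L) (b * L)) (L * L) = hi * L"
    using max_min_scale[OF L] min_max_scale[OF L]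
    by (simp_all add: lo_hi_def loF_def hiF_def a_b_ya_yb_def L_def)
  ultimately have "Phi ((q - p) \<bullet> (q - p)) ((r - p) \<bullet> (q - p)) ((s - p) \<bullet> (q - p))
        (cross (q - p) (r - p)) (cross (q - p) (s - p)) v \<longleftrightarrow>
      Phi2 (L * L) (a * L) (b * L) (ya * L) (yb * L) v (lo * L) (hi * L)"
    unfolding Phi_def by simp
  also have "\<dots> \<longleftrightarrow> (hi \<le> lo \<and> v = 0) \<or>
         (lo < hi \<and> v * v = (hi - lo) * (hi - lo) \<and>
          0 < v * (2 * ya * (b - a) + (lo + hi - 2 * a) * (yb - ya)) * (b - a))"
    by (rule Phi2_scaled[OF L])
  also have "\<dots> \<longleftrightarrow> v = Ord p q r s"
    using Ord_degenerate[of p q r s] Ord_sign_condition[OF H a_b_ya_yb_def lo_hi_def]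
    by (cases "hi \<le> lo") (auto simp: lo_hi_def)
  finally show ?thesis by blast
qed

lemma zero_joined_cong:
  assumes "\<And>e. e \<in> E \<Longrightarrow> ell1 e = ell2 e"
  shows "zero_joined E src tgt ell1 = zero_joined E src tgt ell2"
proof -
  have "{(src e, tgt e) | e. e \<in> E \<and> ell1 e = 0} = {(src e, tgt e) | e. e \<in> E \<and> ell2 e = 0}"
    using assms by (intro Collect_cong) metis
  then show ?thesis unfolding zero_joined_def[abs_def] by (simp only: Let_def)
qed

lemma nontouching_cong:
  assumes "\<And>e. e \<in> E \<Longrightarrow> ell1 e = ell2 e"
  shows "nontouching E src tgt ell1 C = nontouching E src tgt ell2 C"
  by (simp only: nontouching_def zero_joined_cong[OF assms])

definition NT :: "'e set \<Rightarrow> ('e \<Rightarrow> 'v::finite) \<Rightarrow> ('e \<Rightarrow> 'v) \<Rightarrow> (real^2)^'v \<Rightarrow> bool" where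
  "NT E src tgt C \<longleftrightarrow> nontouching E src tgt (\<lambda>e. dist (C $ src e) (C $ tgt e)) C"

text \<open>The union of all NConf_eps is exactly the set of such configurations: the realised
  lengths are eps-related to ell for eps the total deviation.\<close>
lemma NConf_Union_eq_NT:
  fixes E :: "'e::finite set" and src tgt :: "'e \<Rightarrow> 'v::finite"
  assumes "linkage E src tgt ell"
  shows "C \<in> (\<Union>eps\<in>{0..}. NConf E src tgt ell eps) \<longleftrightarrow> NT E src tgt C"
proof
  assume "C \<in> (\<Union>eps\<in>{0..}. NConf E src tgt ell eps)"
  then obtain ell' where conf: "is_configuration E src tgt ell' C" and nt: "nontouching E src tgt ell' C"
    unfolding NConf_def by blast
  have "nontouching E src tgt ell' C = NT E src tgt C"
    unfolding NT_def by (rule nontouching_cong) (use conf in \<open>simp add: is_configuration_def\<close>)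
  then show "NT E src tgt C" using nt by simp
next
  assume nt: "NT E src tgt C"
  define ell' where "ell' e = dist (C $ src e) (C $ tgt e)" for e
  define eps where "eps = (\<Sum>e\<in>E. \<bar>ell e - ell' e\<bar>)"
  have "eps \<ge> 0" unfolding eps_def by (simp add: sum_nonneg)
  moreover have "eps_related E eps ell ell'"
    unfolding eps_related_def eps_def by (intro ballI member_le_sum) auto
  moreover have "linkage E src tgt ell'" using assms by (simp add: linkage_def ell'_def)
  moreover have "is_configuration E src tgt ell' C" by (simp add: is_configuration_def ell'_def)
  moreover have "nontouching E src tgt ell' C" using nt by (simp add: NT_def ell'_def[abs_def])
  ultimately show "C \<in> (\<Union>eps\<in>{0..}. NConf E src tgt ell eps)" unfolding NConf_def by auto
qed

lemma NT_no_crossing: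
  assumes "NT E src tgt C" "e1 \<in> E" "e2 \<in> E" "e1 \<noteq> e2"
  shows "closed_segment (C $ src e1) (C $ tgt e1) \<inter> closed_segment (C $ src e2) (C $ tgt e2)
           \<subseteq> {C $ src e1, C $ tgt e1}"
  using assms unfolding NT_def nontouching_def bar_segment_def by blast

text \<open>A bar does not see itself: it lies on its own axis.\<close>
lemma Ord_self: "Ord p q p q = 0"
proof -
  have "ycoord p q z = 0" if "z \<in> closed_segment p q" for z
    using that in_segment_iff[of z p q] by (simp add: ycoord_cross)
  then have "shadow p q p q (\<lambda>y. 0 \<le> y) = shadow p q p q (\<lambda>y. y \<le> 0)"
    by (auto simp: shadow_def)
  then show ?thesis unfolding Ord_shadow by simp
qed

definition entry :: "'e set \<Rightarrow> ('e \<Rightarrow> 'v::finite) \<Rightarrow> ('e \<Rightarrow> 'v) \<Rightarrow> (real^2)^'v \<Rightarrow> 'e \<times> 'e \<Rightarrow> real" where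
  "entry E src tgt C ij =
     (if fst ij \<in> E \<and> snd ij \<in> E
      then Ord (C $ src (fst ij)) (C $ tgt (fst ij)) (C $ src (snd ij)) (C $ tgt (snd ij)) else 0)"

lemma Annot_entry: "Annot E src tgt C = (C, \<chi> ij. entry E src tgt C ij)"
  by (simp add: Annot_def entry_def)

lemma entry_cases:
  obtains "\<not> (fst ij \<in> E \<and> snd ij \<in> E \<and> fst ij \<noteq> snd ij)" "\<And>C. entry E src tgt C ij = 0"
  | "fst ij \<in> E" "snd ij \<in> E" "fst ij \<noteq> snd ij"
  by (cases "fst ij \<in> E \<and> snd ij \<in> E \<and> fst ij \<noteq> snd ij") (auto simp: entry_def Ord_self)

lemma continuous_on_Annot:
  fixes E :: "'e::finite set" and src tgt :: "'e \<Rightarrow> 'v::finite"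
  assumes "\<And>C. C \<in> X \<Longrightarrow> NT E src tgt C"
  shows "continuous_on X (Annot E src tgt)"
proof -
  have "continuous_on X (\<lambda>C. entry E src tgt C ij)" for ij
  proof (cases rule: entry_cases[of ij E src tgt])
    case 1
    then show ?thesis by simp
  next
    case 2
    have "continuous_on X
        (\<lambda>C. Ord (C $ src (fst ij)) (C $ tgt (fst ij)) (C $ src (snd ij)) (C $ tgt (snd ij)))"
      by (rule continuous_on_Ord)
        (use NT_no_crossing[OF assms 2] in \<open>auto intro: continuous_on_component continuous_on_id\<close>)
    then show ?thesis using 2 by (simp add: entry_def)
  qed
  then show ?thesis unfolding Annot_entry[abs_def]
    by (intro continuous_on_Pair continuous_on_id continuous_on_vec_lambda)
qed

section \<open>Semi-algebraicity\<close>

text \<open>Two vertices are joined by zero-length bars iff they are joined through the (unique)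
  set S of bars whose endpoints coincide; quantifying over the finitely many S makes this
  a semi-algebraic condition.\<close>
definition joined_through :: "('e \<Rightarrow> 'v) \<Rightarrow> ('e \<Rightarrow> 'v) \<Rightarrow> 'e set \<Rightarrow> 'v \<Rightarrow> 'v \<Rightarrow> bool" where
  "joined_through src tgt S u w \<longleftrightarrow> (let Z = {(src e, tgt e) | e. e \<in> S} in (u, w) \<in> (Z \<union> Z\<inverse>)\<^sup>*)"

lemma zero_joined_char:
  "zero_joined E src tgt (\<lambda>e. dist (C $ src e) (C $ tgt e)) u w \<longleftrightarrow>
   (\<exists>S\<in>Pow E. (\<forall>e\<in>E. (C $ src e = C $ tgt e) \<longleftrightarrow> e \<in> S) \<and> joined_through src tgt S u w)"
proof -
  define S0 where "S0 = {e \<in> E. C $ src e = C $ tgt e}"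
  have "{(src e, tgt e) | e. e \<in> E \<and> dist (C $ src e) (C $ tgt e) = 0} = {(src e, tgt e) | e. e \<in> S0}"
    by (simp add: S0_def)
  then have zj: "zero_joined E src tgt (\<lambda>e. dist (C $ src e) (C $ tgt e)) u w \<longleftrightarrow> joined_through src tgt S0 u w"
    unfolding zero_joined_def joined_through_def by (simp only:)
  have "S = S0" if "S \<in> Pow E" "\<forall>e\<in>E. (C $ src e = C $ tgt e) \<longleftrightarrow> e \<in> S" for S
    using that by (auto simp: S0_def)
  moreover have "S0 \<in> Pow E" "\<forall>e\<in>E. (C $ src e = C $ tgt e) \<longleftrightarrow> e \<in> S0"
    by (auto simp: S0_def)
  ultimately show ?thesis using zj by blast
qed

text \<open>NT as a formula in the coordinates: quantifiers range over bars, vertices and sets of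
  bars only.\<close>
lemma NT_char:
  "NT E src tgt C \<longleftrightarrow>
    (\<forall>e1\<in>E. \<forall>e2\<in>E. e1 \<noteq> e2 \<longrightarrow> segcond (C $ src e1) (C $ tgt e1) (C $ src e2) (C $ tgt e2)) \<and>
    (\<forall>u\<in>UNIV. \<forall>w\<in>UNIV. (C $ u = C $ w) \<longleftrightarrow>
        (\<exists>S\<in>Pow E. (\<forall>e\<in>E. (C $ src e = C $ tgt e) \<longleftrightarrow> e \<in> S) \<and> joined_through src tgt S u w))"
  unfolding NT_def nontouching_def segcond_def bar_segment_def zero_joined_char by simp

lemma ppoly_fst: "ppoly (\<lambda>y::((real^2)^'v) \<times> ('b::euclidean_space). fst y $ v)"
  by (intro ppoly_bounded_linear bounded_linear_compose[OF bounded_linear_vec_nth bounded_linear_fst])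

lemma ppoly_fst_snd:
  "ppoly (\<lambda>y::('a::euclidean_space) \<times> ((real^2)^'v) \<times> ('b::euclidean_space). fst (snd y) $ v)"
  by (intro ppoly_bounded_linear bounded_linear_compose[OF bounded_linear_vec_nth
        bounded_linear_compose[OF bounded_linear_fst bounded_linear_snd]])

lemma poly_snd_snd:
  "(\<lambda>y::('a::euclidean_space) \<times> ('b::euclidean_space) \<times> (real^'i::finite). snd (snd y) $ i) \<in> poly_fun"
  by (intro poly_linear bounded_linear.linear bounded_linear_compose[OF bounded_linear_vec_nth
        bounded_linear_compose[OF bounded_linear_snd bounded_linear_snd]])

lemma sa_NT:
  fixes E :: "'e::finite set" and src tgt :: "'e \<Rightarrow> 'v::finite"
  shows "sa (\<lambda>y::((real^2)^'v) \<times> ('b::euclidean_space). NT E src tgt (fst y))"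
  unfolding NT_char
  by (intro sa_conj sa_ball sa_imp sa_const sa_segcond ppoly_fst sa_iff sa_peq sa_bex
      finite_Pow_iff[THEN iffD2] finite finite_UNIV)

definition entry_rel :: "'e set \<Rightarrow> ('e \<Rightarrow> 'v::finite) \<Rightarrow> ('e \<Rightarrow> 'v) \<Rightarrow> 'e \<times> 'e \<Rightarrow> (real^2)^'v \<Rightarrow> real \<Rightarrow> bool" where
  "entry_rel E src tgt ij C a \<longleftrightarrow>
    (if fst ij \<in> E \<and> snd ij \<in> E \<and> fst ij \<noteq> snd ij then
       Phi ((C $ tgt (fst ij) - C $ src (fst ij)) \<bullet> (C $ tgt (fst ij) - C $ src (fst ij)))
           ((C $ src (snd ij) - C $ src (fst ij)) \<bullet> (C $ tgt (fst ij) - C $ src (fst ij)))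
           ((C $ tgt (snd ij) - C $ src (fst ij)) \<bullet> (C $ tgt (fst ij) - C $ src (fst ij)))
           (cross (C $ tgt (fst ij) - C $ src (fst ij)) (C $ src (snd ij) - C $ src (fst ij)))
           (cross (C $ tgt (fst ij) - C $ src (fst ij)) (C $ tgt (snd ij) - C $ src (fst ij))) a
     else a = 0)"

lemma entry_rel_iff:
  assumes "NT E src tgt C"
  shows "entry_rel E src tgt ij C a \<longleftrightarrow> a = entry E src tgt C ij"
proof (cases rule: entry_cases[of ij E src tgt])
  case 1
  then show ?thesis by (auto simp: entry_rel_def entry_def)
next
  case 2
  then show ?thesis using Ord_Phi[OF NT_no_crossing[OF assms]] by (simp add: entry_rel_def entry_def)
qed

lemma sa_entry_rel:
  fixes E :: "'e::finite set" and src tgt :: "'e \<Rightarrow> 'v::finite"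
  shows "sa (\<lambda>y::((real^2)^'v) \<times> ('b::euclidean_space) \<times> (real^('e \<times> 'e)).
           entry_rel E src tgt ij (fst y) (snd (snd y) $ ij))"
proof (cases "fst ij \<in> E \<and> snd ij \<in> E \<and> fst ij \<noteq> snd ij")
  case True
  show ?thesis unfolding entry_rel_def if_P[OF True]
    by (intro sa_Phi poly_inner poly_cross ppoly_diff ppoly_fst poly_snd_snd)
next
  case False
  show ?thesis unfolding entry_rel_def if_not_P[OF False]
    by (intro sa_eq poly_snd_snd poly_fun.const)
qed

lemma graph_Annot_eq:
  fixes E :: "'e::finite set" and src tgt :: "'e \<Rightarrow> 'v::finite"
  assumes XNT: "\<And>C. C \<in> X \<longleftrightarrow> NT E src tgt C"
  shows "{(x, Annot E src tgt x) | x. x \<in> X} =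
    {y. NT E src tgt (fst y) \<and> (\<forall>v\<in>UNIV. fst (snd y) $ v = fst y $ v) \<and>
        (\<forall>ij\<in>UNIV. entry_rel E src tgt ij (fst y) (snd (snd y) $ ij))}"
  (is "?G = ?R")
proof (intro equalityI subsetI)
  fix y assume "y \<in> ?G"
  then obtain x where y: "y = (x, Annot E src tgt x)" and "NT E src tgt x" using XNT by blast
  then show "y \<in> ?R" by (simp add: Annot_entry entry_rel_iff)
next
  fix y assume "y \<in> ?R"
  then have nt: "NT E src tgt (fst y)" and pts: "\<forall>v. fst (snd y) $ v = fst y $ v"
    and rel: "\<forall>ij. entry_rel E src tgt ij (fst y) (snd (snd y) $ ij)" by auto
  have "fst (snd y) = fst y" by (intro vec_eq_iff[THEN iffD2] allI) (use pts in simp)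
  moreover have "snd (snd y) $ ij = entry E src tgt (fst y) ij" for ij
    using rel entry_rel_iff[OF nt] by blast
  then have "snd (snd y) = (\<chi> ij. entry E src tgt (fst y) ij)" by (simp add: vec_eq_iff)
  ultimately have "y = (fst y, Annot E src tgt (fst y))" by (simp add: Annot_entry prod_eq_iff)
  then show "y \<in> ?G" using nt XNT by blast
qed

lemma semialgebraic_map_on_Annot:
  fixes E :: "'e::finite set" and src tgt :: "'e \<Rightarrow> 'v::finite"
  assumes "\<And>C. C \<in> X \<longleftrightarrow> NT E src tgt C"
  shows "semialgebraic_map_on X (Annot E src tgt)"
proof -
  have "sa (\<lambda>y::((real^2)^'v) \<times> ((real^2)^'v) \<times> (real^('e \<times> 'e)).
          NT E src tgt (fst y) \<and> (\<forall>v\<in>UNIV. fst (snd y) $ v = fst y $ v) \<and>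
          (\<forall>ij\<in>UNIV. entry_rel E src tgt ij (fst y) (snd (snd y) $ ij)))"
    by (intro sa_conj sa_NT sa_ball sa_entry_rel sa_peq ppoly_fst ppoly_fst_snd finite finite_UNIV)
  then show ?thesis unfolding semialgebraic_map_on_def graph_Annot_eq[OF assms] sa_def .
qed

theorem mainTheorem2:
  fixes E :: "'e::finite set" and src tgt :: "'e \<Rightarrow> 'v::finite" and ell :: "'e \<Rightarrow> real"
  assumes "linkage E src tgt ell"
  defines "X \<equiv> (\<Union>eps\<in>{0..}. NConf E src tgt ell eps)"
  shows "inj_on (Annot E src tgt) X \<and>
         semialgebraic_map_on X (Annot E src tgt) \<and>
         continuous_on X (Annot E src tgt)"
proof (intro conjI)
  have X_NT: "C \<in> X \<longleftrightarrow> NT E src tgt C" for C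
    unfolding X_def by (rule NConf_Union_eq_NT[OF assms(1)])
  show "inj_on (Annot E src tgt) X"
    by (rule inj_onI) (simp add: Annot_def)
  show "semialgebraic_map_on X (Annot E src tgt)"
    using X_NT by (rule semialgebraic_map_on_Annot)
  show "continuous_on X (Annot E src tgt)"
    using X_NT by (intro continuous_on_Annot) simp
qed

end
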